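(* Let $R=k[x_1,\dots,x_n]$ be a polynomial ring over a field $k$, let $I$ be a monomial ideal of $R$, and let $t\ge 1$. Then $I^{(t)}$ is integrally closed if and only if $I_F^t$ is integrally closed for all $F\in\mathcal F(I)$.
   Context: For $F\subseteq[n]$, $P_F$ is the ideal generated by the variables $x_i$ with $i\notin F$. $\mathcal F(I)$ is the set of all $F\subseteq[n]$ such that $P_F$ is a minimal prime of $I$ (every minimal prime of a monomial ideal has this form), and for $F\in\mathcal F(I)$, $I_F$ denotes the (monomial) primary component of $I$ associated with $P_F$. The $t$-th symbolic power $I^{(t)}$ is the intersection of the primary components of $I^t$ associated with the minimal primes of $I$. *)

theory Defs
  imports "HOL-Library.Poly_Mapping"
begin

text \<open>The polynomial ring k[x_v : v in 'v] over a field k, with finitely many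
  variables indexed by a finite type 'v (so n = CARD('v)).\<close>

type_synonym ('v, 'k) mpoly = "('v \<Rightarrow>\<^sub>0 nat) \<Rightarrow>\<^sub>0 'k"

definition Var :: "'v \<Rightarrow> ('v, 'k::field) mpoly" where
  "Var i = Poly_Mapping.single (Poly_Mapping.single i 1) 1"

definition monom :: "('v \<Rightarrow>\<^sub>0 nat) \<Rightarrow> ('v, 'k::field) mpoly" where
  "monom a = Poly_Mapping.single a 1"

definition is_ideal :: "('v, 'k::field) mpoly set \<Rightarrow> bool" where
  "is_ideal I \<longleftrightarrow> 0 \<in> I \<and> (\<forall>a\<in>I. \<forall>b\<in>I. a + b \<in> I) \<and> (\<forall>r. \<forall>a\<in>I. r * a \<in> I)"

definition ideal_gen :: "('v, 'k::field) mpoly set \<Rightarrow> ('v, 'k) mpoly set" where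
  "ideal_gen S = \<Inter>{J. is_ideal J \<and> S \<subseteq> J}"

definition monomial_ideal :: "('v, 'k::field) mpoly set \<Rightarrow> bool" where
  "monomial_ideal I \<longleftrightarrow> (\<exists>S. I = ideal_gen (monom ` S))"

definition ideal_prod :: "('v, 'k::field) mpoly set \<Rightarrow> ('v, 'k) mpoly set \<Rightarrow> ('v, 'k) mpoly set" where
  "ideal_prod I J = ideal_gen {a * b | a b. a \<in> I \<and> b \<in> J}"

fun ideal_pow :: "('v, 'k::field) mpoly set \<Rightarrow> nat \<Rightarrow> ('v, 'k) mpoly set" where
  "ideal_pow I 0 = UNIV"
| "ideal_pow I (Suc t) = ideal_prod I (ideal_pow I t)"

definition prime_ideal :: "('v, 'k::field) mpoly set \<Rightarrow> bool" where
  "prime_ideal P \<longleftrightarrow> is_ideal P \<and> P \<noteq> UNIV \<and> (\<forall>a b. a * b \<in> P \<longrightarrow> a \<in> P \<or> b \<in> P)"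

definition minimal_prime :: "('v, 'k::field) mpoly set \<Rightarrow> ('v, 'k) mpoly set \<Rightarrow> bool" where
  "minimal_prime I P \<longleftrightarrow> prime_ideal P \<and> I \<subseteq> P \<and>
     (\<forall>Q. prime_ideal Q \<and> I \<subseteq> Q \<and> Q \<subseteq> P \<longrightarrow> Q = P)"

definition PF :: "'v set \<Rightarrow> ('v, 'k::field) mpoly set" where
  "PF F = ideal_gen (Var ` (- F))"

definition Fam :: "('v, 'k::field) mpoly set \<Rightarrow> 'v set set" where
  "Fam I = {F. minimal_prime I (PF F)}"

text \<open>The primary component of I associated with the minimal prime P_F
  (the isolated component: contraction of the localisation I R_{P_F}).\<close>
definition prim_comp :: "('v, 'k::field) mpoly set \<Rightarrow> 'v set \<Rightarrow> ('v, 'k) mpoly set" where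
  "prim_comp I F = {f. \<exists>s. s \<notin> PF F \<and> s * f \<in> I}"

definition symb_pow :: "('v, 'k::field) mpoly set \<Rightarrow> nat \<Rightarrow> ('v, 'k) mpoly set" where
  "symb_pow I t = (\<Inter>F\<in>Fam I. prim_comp (ideal_pow I t) F)"

definition integral_closure :: "('v, 'k::field) mpoly set \<Rightarrow> ('v, 'k) mpoly set" where
  "integral_closure I = {f. \<exists>m\<ge>1. \<exists>a. (\<forall>i\<in>{1..m}. a i \<in> ideal_pow I i) \<and>
       f ^ m + (\<Sum>i=1..m. a i * f ^ (m - i)) = 0}"

definition integrally_closed :: "('v, 'k::field) mpoly set \<Rightarrow> bool" where
  "integrally_closed I \<longleftrightarrow> integral_closure I = I"

end

theory Submission
  imports Defs "HOL-Library.Countable"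
begin

text \<open>The symbolic power \<open>I\<^sup>(\<^sup>t\<^sup>)\<close> is the intersection, over the minimal primes
  \<open>P = P\<^sub>F\<close> of I, of the contractions \<open>I\<^sup>t R\<^sub>P \<inter> R\<close>. Integral closure commutes with
  such contractions, because one element outside P clears all denominators of an integral
  equation; hence \<open>I\<^sup>(\<^sup>t\<^sup>)\<close> is integrally closed iff every \<open>I\<^sup>t R\<^sub>P \<inter> R\<close> is.
  For a monomial ideal, localising at \<open>P\<^sub>F\<close> amounts to setting the variables indexed by F
  equal to 1, and \<open>I\<^sup>t R\<^sub>P \<inter> R = (I\<^sub>F)\<^sup>t\<close>: the ideal \<open>(I\<^sub>F)\<^sup>t\<close> is generated by
  monomials in the variables outside F, and such ideals are \<open>P\<^sub>F\<close>-saturated by a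
  leading-term argument.\<close>

lemma is_ideal_ideal_gen: "is_ideal (ideal_gen S)"
  unfolding ideal_gen_def is_ideal_def by blast

lemma ideal_gen_mem: "x \<in> S \<Longrightarrow> x \<in> ideal_gen S"
  unfolding ideal_gen_def by blast

lemma ideal_gen_least: "is_ideal J \<Longrightarrow> S \<subseteq> J \<Longrightarrow> ideal_gen S \<subseteq> J"
  unfolding ideal_gen_def by blast

lemma ideal_zero: "is_ideal I \<Longrightarrow> 0 \<in> I"
  unfolding is_ideal_def by blast

lemma ideal_add: "is_ideal I \<Longrightarrow> a \<in> I \<Longrightarrow> b \<in> I \<Longrightarrow> a + b \<in> I"
  unfolding is_ideal_def by blast

lemma ideal_mult: "is_ideal I \<Longrightarrow> a \<in> I \<Longrightarrow> r * a \<in> I"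
  unfolding is_ideal_def by blast

lemma ideal_sum: "is_ideal I \<Longrightarrow> (\<And>x. x \<in> A \<Longrightarrow> f x \<in> I) \<Longrightarrow> sum f A \<in> I"
  by (induction A rule: infinite_finite_induct) (auto simp: ideal_zero ideal_add)

lemma ideal_gen_one: "ideal_gen {1} = (UNIV :: ('v, 'k::field) mpoly set)"
proof -
  have "x * 1 \<in> ideal_gen {1}" for x :: "('v, 'k) mpoly"
    by (intro ideal_mult is_ideal_ideal_gen ideal_gen_mem) simp
  then show ?thesis
    by auto
qed

lemma is_ideal_ideal_prod: "is_ideal (ideal_prod I J)"
  by (simp add: ideal_prod_def is_ideal_ideal_gen)

lemma is_ideal_UNIV: "is_ideal UNIV"
  unfolding is_ideal_def by simp

lemma is_ideal_ideal_pow: "is_ideal (ideal_pow I n)"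
  by (cases n) (simp_all add: is_ideal_UNIV is_ideal_ideal_prod)

lemma ideal_prod_mem: "a \<in> I \<Longrightarrow> b \<in> J \<Longrightarrow> a * b \<in> ideal_prod I J"
  unfolding ideal_prod_def by (rule ideal_gen_mem) auto

lemma ideal_prod_least:
  "is_ideal K \<Longrightarrow> (\<And>a b. a \<in> I \<Longrightarrow> b \<in> J \<Longrightarrow> a * b \<in> K) \<Longrightarrow> ideal_prod I J \<subseteq> K"
  unfolding ideal_prod_def by (rule ideal_gen_least) auto

lemma ideal_pow_mono: "I \<subseteq> I' \<Longrightarrow> ideal_pow I n \<subseteq> ideal_pow I' n"
proof (induction n)
  case (Suc n)
  then show ?case
    by (simp, intro ideal_prod_least is_ideal_ideal_prod) (auto intro: ideal_prod_mem)
qed simp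

lemma ideal_prod_ideal_gen:
  "ideal_prod (ideal_gen X) (ideal_gen Y) = ideal_gen {x * y | x y. x \<in> X \<and> y \<in> Y}"
  (is "_ = ?H")
proof
  have H: "is_ideal ?H" by (rule is_ideal_ideal_gen)
  have left: "ideal_gen X \<subseteq> {a. \<forall>y\<in>Y. a * y \<in> ?H}"
  proof (rule ideal_gen_least)
    show "is_ideal {a. \<forall>y\<in>Y. a * y \<in> ?H}"
      using H by (auto simp: is_ideal_def distrib_right mult.assoc)
    show "X \<subseteq> {a. \<forall>y\<in>Y. a * y \<in> ?H}"
      by (auto intro: ideal_gen_mem)
  qed
  have right: "ideal_gen Y \<subseteq> {b. \<forall>a\<in>ideal_gen X. a * b \<in> ?H}"
  proof (rule ideal_gen_least)
    show "is_ideal {b. \<forall>a\<in>ideal_gen X. a * b \<in> ?H}"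
      using H by (auto simp: is_ideal_def distrib_left mult.left_commute)
    show "Y \<subseteq> {b. \<forall>a\<in>ideal_gen X. a * b \<in> ?H}"
      using left by blast
  qed
  show "ideal_prod (ideal_gen X) (ideal_gen Y) \<subseteq> ?H"
    using right by (intro ideal_prod_least[OF H]) blast
  show "?H \<subseteq> ideal_prod (ideal_gen X) (ideal_gen Y)"
    by (rule ideal_gen_least[OF is_ideal_ideal_prod]) (auto intro: ideal_prod_mem ideal_gen_mem)
qed

lemma subset_integral_closure: "A \<subseteq> integral_closure A"
proof
  fix f assume "f \<in> A"
  then have "- f \<in> ideal_pow A 1"
    using ideal_prod_mem[of f A "-1" UNIV] by simp
  then show "f \<in> integral_closure A"
    unfolding integral_closure_def by (intro CollectI exI[of _ 1] exI[of _ "\<lambda>_. - f"]) auto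
qed

lemma integrally_closed_iff_subset: "integrally_closed A \<longleftrightarrow> integral_closure A \<subseteq> A"
  unfolding integrally_closed_def using subset_integral_closure by blast

lemma integral_closure_mono: "A \<subseteq> B \<Longrightarrow> integral_closure A \<subseteq> integral_closure B"
  unfolding integral_closure_def using ideal_pow_mono by blast

lemma integral_equation_scale:
  fixes f \<sigma> :: "'a::comm_ring_1"
  assumes "f ^ m + (\<Sum>i=1..m. a i * f ^ (m - i)) = 0"
  shows "(\<sigma> * f) ^ m + (\<Sum>i=1..m. (\<sigma> ^ i * a i) * (\<sigma> * f) ^ (m - i)) = 0"
proof -
  have "(\<sigma> ^ i * a i) * (\<sigma> * f) ^ (m - i) = \<sigma> ^ m * (a i * f ^ (m - i))" if "i \<in> {1..m}" for i
  proof -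
    have "\<sigma> ^ m = \<sigma> ^ i * \<sigma> ^ (m - i)"
      using that by (simp flip: power_add)
    then show ?thesis by (simp add: power_mult_distrib algebra_simps)
  qed
  then have "(\<sigma> * f) ^ m + (\<Sum>i=1..m. (\<sigma> ^ i * a i) * (\<sigma> * f) ^ (m - i))
      = \<sigma> ^ m * (f ^ m + (\<Sum>i=1..m. a i * f ^ (m - i)))"
    by (simp add: sum_distrib_left power_mult_distrib distrib_left)
  with assms show ?thesis by simp
qed

section \<open>Saturation with respect to a prime\<close>

text \<open>\<open>saturation P X\<close> is the contraction \<open>X R\<^sub>P \<inter> R\<close> of the localisation of X at P.\<close>

definition saturation :: "('v, 'k::field) mpoly set \<Rightarrow> ('v, 'k) mpoly set \<Rightarrow> ('v, 'k) mpoly set" where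
  "saturation P X = {f. \<exists>s. s \<notin> P \<and> s * f \<in> X}"

lemma prim_comp_eq_saturation: "prim_comp I F = saturation (PF F) I"
  unfolding prim_comp_def saturation_def ..

lemma prime_ideal_one_notin: "prime_ideal P \<Longrightarrow> 1 \<notin> P"
  unfolding prime_ideal_def is_ideal_def by (metis UNIV_eq_I mult.right_neutral)

lemma prime_ideal_mult_notin: "prime_ideal P \<Longrightarrow> s \<notin> P \<Longrightarrow> s' \<notin> P \<Longrightarrow> s * s' \<notin> P"
  unfolding prime_ideal_def by blast

lemma prime_ideal_prod_notin:
  assumes P: "prime_ideal P"
  shows "finite A \<Longrightarrow> (\<And>i. i \<in> A \<Longrightarrow> s i \<notin> P) \<Longrightarrow> prod s A \<notin> P"
  by (induction A rule: finite_induct)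
    (auto simp: prime_ideal_one_notin[OF P] prime_ideal_mult_notin[OF P])

lemma subset_saturation: "prime_ideal P \<Longrightarrow> X \<subseteq> saturation P X"
  unfolding saturation_def using prime_ideal_one_notin by fastforce

lemma saturation_mono: "X \<subseteq> Y \<Longrightarrow> saturation P X \<subseteq> saturation P Y"
  unfolding saturation_def by blast

lemma saturation_saturation_subset: "prime_ideal P \<Longrightarrow> saturation P (saturation P X) \<subseteq> saturation P X"
  unfolding saturation_def using prime_ideal_mult_notin by (fastforce simp: mult.assoc)

lemma is_ideal_saturation:
  assumes P: "prime_ideal P" and X: "is_ideal X"
  shows "is_ideal (saturation P X)"
  unfolding is_ideal_def
proof (intro conjI ballI allI)
  show "0 \<in> saturation P X"
    using subset_saturation[OF P] ideal_zero[OF X] by blast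
next
  fix a b assume "a \<in> saturation P X" "b \<in> saturation P X"
  then obtain s s' where "s \<notin> P" "s * a \<in> X" "s' \<notin> P" "s' * b \<in> X"
    unfolding saturation_def by blast
  moreover have "(s * s') * (a + b) = s' * (s * a) + s * (s' * b)"
    by (simp add: algebra_simps)
  ultimately have "s * s' \<notin> P" "(s * s') * (a + b) \<in> X"
    using X prime_ideal_mult_notin[OF P] by (simp_all add: ideal_add ideal_mult)
  then show "a + b \<in> saturation P X"
    unfolding saturation_def by blast
next
  fix r a assume "a \<in> saturation P X"
  then obtain s where "s \<notin> P" "s * a \<in> X"
    unfolding saturation_def by blast
  moreover have "r * (s * a) \<in> X"
    using X \<open>s * a \<in> X\<close> by (rule ideal_mult)
  ultimately have "s * (r * a) \<in> X"
    by (simp add: mult.left_commute)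
  with \<open>s \<notin> P\<close> show "r * a \<in> saturation P X"
    unfolding saturation_def by blast
qed

lemma saturation_mult:
  assumes P: "prime_ideal P" and "a \<in> saturation P A" "b \<in> saturation P B"
  shows "a * b \<in> saturation P (ideal_prod A B)"
proof -
  obtain s s' where "s \<notin> P" "s * a \<in> A" "s' \<notin> P" "s' * b \<in> B"
    using assms(2,3) unfolding saturation_def by blast
  moreover have "(s * a) * (s' * b) \<in> ideal_prod A B"
    using \<open>s * a \<in> A\<close> \<open>s' * b \<in> B\<close> by (rule ideal_prod_mem)
  ultimately have "s * s' \<notin> P" "(s * s') * (a * b) \<in> ideal_prod A B"
    using prime_ideal_mult_notin[OF P] by (simp_all add: ac_simps)
  then show ?thesis
    unfolding saturation_def by blast
qed

lemma ideal_pow_saturation: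
  assumes P: "prime_ideal P" and "A \<subseteq> saturation P B"
  shows "ideal_pow A n \<subseteq> saturation P (ideal_pow B n)"
proof (induction n)
  case 0
  then show ?case using subset_saturation[OF P] by simp
next
  case (Suc n)
  have "ideal_prod A (ideal_pow A n) \<subseteq> saturation P (ideal_prod B (ideal_pow B n))"
  proof (rule ideal_prod_least[OF is_ideal_saturation[OF P is_ideal_ideal_prod]])
    fix a b assume "a \<in> A" "b \<in> ideal_pow A n"
    then have "a \<in> saturation P B" "b \<in> saturation P (ideal_pow B n)"
      using assms(2) Suc by blast+
    then show "a * b \<in> saturation P (ideal_prod B (ideal_pow B n))"
      by (rule saturation_mult[OF P])
  qed
  then show ?case by simp
qed

lemma saturation_common_multiplier:
  assumes P: "prime_ideal P" and "finite A"
    and Y: "\<And>i. i \<in> A \<Longrightarrow> is_ideal (Y i)"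
    and a: "\<And>i. i \<in> A \<Longrightarrow> a i \<in> saturation P (Y i)"
  shows "\<exists>\<sigma>. \<sigma> \<notin> P \<and> (\<forall>i\<in>A. \<sigma> * a i \<in> Y i)"
proof -
  have "\<forall>i\<in>A. \<exists>s. s \<notin> P \<and> s * a i \<in> Y i"
    using a unfolding saturation_def by blast
  from bchoice[OF this] obtain s where s: "\<And>i. i \<in> A \<Longrightarrow> s i \<notin> P \<and> s i * a i \<in> Y i"
    by blast
  have "prod s A * a i \<in> Y i" if "i \<in> A" for i
  proof -
    have "prod s A * a i = prod s (A - {i}) * (s i * a i)"
      using that \<open>finite A\<close> by (simp add: prod.remove mult.assoc)
    then show ?thesis
      using ideal_mult[OF Y[OF that] conjunct2[OF s[OF that]]] by simp
  qed
  moreover have "prod s A \<notin> P"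
    using prime_ideal_prod_notin[OF P \<open>finite A\<close>] s by blast
  ultimately show ?thesis by blast
qed

text \<open>An integral equation for f over X becomes, after clearing the denominators of its
  coefficients by a single \<open>\<sigma> \<notin> P\<close>, an integral equation for \<open>\<sigma> * f\<close> over Y.\<close>

lemma integral_closure_subset_saturation:
  assumes P: "prime_ideal P" and Y: "integral_closure Y \<subseteq> Y" and XY: "X \<subseteq> saturation P Y"
  shows "integral_closure X \<subseteq> saturation P Y"
proof
  fix f assume "f \<in> integral_closure X"
  then obtain m a where m: "m \<ge> 1" and a: "\<And>i. i \<in> {1..m} \<Longrightarrow> a i \<in> ideal_pow X i"
    and eq: "f ^ m + (\<Sum>i=1..m. a i * f ^ (m - i)) = 0"
    unfolding integral_closure_def by blast
  have "a i \<in> saturation P (ideal_pow Y i)" if "i \<in> {1..m}" for i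
    using ideal_pow_saturation[OF P XY] a[OF that] by blast
  then obtain \<sigma> where \<sigma>: "\<sigma> \<notin> P" "\<And>i. i \<in> {1..m} \<Longrightarrow> \<sigma> * a i \<in> ideal_pow Y i"
    using saturation_common_multiplier[OF P, of "{1..m}" "ideal_pow Y" a] is_ideal_ideal_pow
    by blast
  have "\<sigma> * f \<in> integral_closure Y"
    unfolding integral_closure_def
  proof (intro CollectI exI conjI ballI)
    show "m \<ge> 1" by (rule m)
    show "\<sigma> ^ i * a i \<in> ideal_pow Y i" if "i \<in> {1..m}" for i
    proof -
      have "\<sigma> ^ i * a i = \<sigma> ^ (i - 1) * (\<sigma> * a i)"
        using that by (cases i) auto
      then show ?thesis
        using ideal_mult[OF is_ideal_ideal_pow \<sigma>(2)[OF that]] by simp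
    qed
    show "(\<sigma> * f) ^ m + (\<Sum>i=1..m. (\<sigma> ^ i * a i) * (\<sigma> * f) ^ (m - i)) = 0"
      by (rule integral_equation_scale[OF eq])
  qed
  then show "f \<in> saturation P Y"
    using Y \<sigma>(1) unfolding saturation_def by blast
qed

lemma integrally_closed_INT_saturation_iff:
  assumes P: "\<And>F. F \<in> A \<Longrightarrow> prime_ideal (P F)"
  shows "integrally_closed (\<Inter>F\<in>A. saturation (P F) Y) \<longleftrightarrow>
         (\<forall>F\<in>A. integrally_closed (saturation (P F) Y))"
  (is "integrally_closed ?X \<longleftrightarrow> _")
proof
  assume closed: "integrally_closed ?X"
  show "\<forall>F\<in>A. integrally_closed (saturation (P F) Y)"
  proof
    fix F assume F: "F \<in> A"
    have "Y \<subseteq> ?X"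
      using subset_saturation[OF P] by blast
    then have "saturation (P F) Y \<subseteq> saturation (P F) ?X"
      by (rule saturation_mono)
    then have "integral_closure (saturation (P F) Y) \<subseteq> saturation (P F) ?X"
      using integral_closure_subset_saturation[OF P[OF F]] closed
      by (simp add: integrally_closed_iff_subset)
    also have "\<dots> \<subseteq> saturation (P F) (saturation (P F) Y)"
      using F by (intro saturation_mono) blast
    also have "\<dots> \<subseteq> saturation (P F) Y"
      by (rule saturation_saturation_subset[OF P[OF F]])
    finally show "integrally_closed (saturation (P F) Y)"
      by (simp add: integrally_closed_iff_subset)
  qed
next
  assume "\<forall>F\<in>A. integrally_closed (saturation (P F) Y)"
  then have "integral_closure ?X \<subseteq> saturation (P F) Y" if "F \<in> A" for F
    using that integral_closure_mono[of ?X "saturation (P F) Y"]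
    by (auto simp: integrally_closed_iff_subset)
  then show "integrally_closed ?X"
    by (simp add: integrally_closed_iff_subset INT_greatest)
qed

definition monom_dvd :: "('v \<Rightarrow>\<^sub>0 nat) \<Rightarrow> ('v \<Rightarrow>\<^sub>0 nat) \<Rightarrow> bool" where
  "monom_dvd a e \<longleftrightarrow> (\<forall>v. Poly_Mapping.lookup a v \<le> Poly_Mapping.lookup e v)"

lemma monom_dvd_add_left: "monom_dvd a e \<Longrightarrow> monom_dvd a (b + e)"
  unfolding monom_dvd_def by (simp add: lookup_add trans_le_add2)

lemma monom_dvd_single:
  "monom_dvd (Poly_Mapping.single i n) e \<longleftrightarrow> n \<le> Poly_Mapping.lookup e i"
  by (auto simp: monom_dvd_def lookup_single when_def)

lemma keys_monom: "Poly_Mapping.keys (monom a :: ('v, 'k::field) mpoly) = {a}"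
  unfolding monom_def by simp

lemma monom_mult: "monom a * monom b = (monom (a + b) :: ('v, 'k::field) mpoly)"
  unfolding monom_def by (simp add: mult_single)

lemma monom_zero: "monom 0 = (1 :: ('v, 'k::field) mpoly)"
  unfolding monom_def by (simp add: one_poly_mapping.abs_eq)

lemma poly_mapping_sum_single:
  "h = (\<Sum>e\<in>Poly_Mapping.keys h. Poly_Mapping.single e (Poly_Mapping.lookup h e))"
  by (rule poly_mapping_eqI) (auto simp: lookup_sum lookup_single when_def in_keys_iff)

lemma mem_monomial_ideal_iff:
  "h \<in> ideal_gen (monom ` T :: ('v, 'k::field) mpoly set) \<longleftrightarrow>
   (\<forall>e\<in>Poly_Mapping.keys h. \<exists>a\<in>T. monom_dvd a e)"
proof
  let ?Q = "{h :: ('v, 'k) mpoly. \<forall>e\<in>Poly_Mapping.keys h. \<exists>a\<in>T. monom_dvd a e}"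
  have "is_ideal ?Q"
    unfolding is_ideal_def
  proof (intro conjI ballI allI)
    show "0 \<in> ?Q" by simp
  next
    fix a b assume "a \<in> ?Q" "b \<in> ?Q"
    then show "a + b \<in> ?Q"
      using keys_add[of a b] by blast
  next
    fix r a assume "a \<in> ?Q"
    show "r * a \<in> ?Q"
    proof (rule CollectI, rule ballI)
      fix e assume "e \<in> Poly_Mapping.keys (r * a)"
      then obtain b c where "e = b + c" "c \<in> Poly_Mapping.keys a"
        using keys_mult[of r a] by blast
      then show "\<exists>a'\<in>T. monom_dvd a' e"
        using \<open>a \<in> ?Q\<close> monom_dvd_add_left by blast
    qed
  qed
  moreover have "monom ` T \<subseteq> ?Q"
    by (auto simp: keys_monom monom_dvd_def)
  ultimately have "ideal_gen (monom ` T) \<subseteq> ?Q"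
    by (rule ideal_gen_least)
  then show "h \<in> ideal_gen (monom ` T) \<Longrightarrow> \<forall>e\<in>Poly_Mapping.keys h. \<exists>a\<in>T. monom_dvd a e"
    by blast
next
  assume divisible: "\<forall>e\<in>Poly_Mapping.keys h. \<exists>a\<in>T. monom_dvd a e"
  have "Poly_Mapping.single e (Poly_Mapping.lookup h e) \<in> ideal_gen (monom ` T)"
    if "e \<in> Poly_Mapping.keys h" for e
  proof -
    from bspec[OF divisible that] obtain a where a: "a \<in> T" "monom_dvd a e" ..
    have "(e - a) + a = e"
    proof (rule poly_mapping_eqI)
      fix v
      have "Poly_Mapping.lookup a v \<le> Poly_Mapping.lookup e v"
        using a(2) unfolding monom_dvd_def by blast
      then show "Poly_Mapping.lookup (e - a + a) v = Poly_Mapping.lookup e v"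
        by (simp add: lookup_add lookup_minus)
    qed
    then have "Poly_Mapping.single e (Poly_Mapping.lookup h e) =
        Poly_Mapping.single (e - a) (Poly_Mapping.lookup h e) * monom a"
      unfolding monom_def by (simp add: mult_single)
    moreover have "monom a \<in> ideal_gen (monom ` T)"
      using a(1) by (intro ideal_gen_mem imageI)
    ultimately show ?thesis
      by (metis ideal_mult[OF is_ideal_ideal_gen])
  qed
  then have "(\<Sum>e\<in>Poly_Mapping.keys h. Poly_Mapping.single e (Poly_Mapping.lookup h e))
      \<in> ideal_gen (monom ` T)"
    by (rule ideal_sum[OF is_ideal_ideal_gen])
  then show "h \<in> ideal_gen (monom ` T)"
    by (simp flip: poly_mapping_sum_single)
qed

lemma PF_eq_monomial_ideal:
  "PF F = ideal_gen (monom ` (\<lambda>i. Poly_Mapping.single i 1) ` (- F) :: ('v, 'k::field) mpoly set)"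
  unfolding PF_def Var_def monom_def by (simp add: image_image)

lemma mem_PF_iff:
  "(h :: ('v, 'k::field) mpoly) \<in> PF F \<longleftrightarrow>
   (\<forall>e\<in>Poly_Mapping.keys h. \<exists>i. i \<notin> F \<and> Poly_Mapping.lookup e i \<noteq> 0)"
  unfolding PF_eq_monomial_ideal mem_monomial_ideal_iff by (auto simp: monom_dvd_single Suc_le_eq)

definition restrict_vars :: "'v set \<Rightarrow> ('v \<Rightarrow>\<^sub>0 nat) \<Rightarrow> ('v \<Rightarrow>\<^sub>0 nat)" where
  "restrict_vars A a = Abs_poly_mapping (\<lambda>v. if v \<in> A then Poly_Mapping.lookup a v else 0)"

lemma lookup_restrict_vars:
  "Poly_Mapping.lookup (restrict_vars A a) v = (if v \<in> A then Poly_Mapping.lookup a v else 0)"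
proof -
  have "finite {v. (if v \<in> A then Poly_Mapping.lookup a v else 0) \<noteq> 0}"
    by (rule finite_subset[OF _ finite_keys[of a]]) (auto simp: in_keys_iff)
  then show ?thesis
    unfolding restrict_vars_def by simp
qed

lemma restrict_vars_add_compl: "restrict_vars A a + restrict_vars (- A) a = a"
  by (rule poly_mapping_eqI) (simp add: lookup_add lookup_restrict_vars)

lemma monom_restrict_vars_notin_PF: "(monom (restrict_vars F a) :: ('v, 'k::field) mpoly) \<notin> PF F"
  by (simp add: mem_PF_iff keys_monom lookup_restrict_vars)

definition monomial_ideal_outside :: "'v set \<Rightarrow> ('v, 'k::field) mpoly set \<Rightarrow> bool" where
  "monomial_ideal_outside F J \<longleftrightarrow>
     (\<exists>T. (\<forall>a\<in>T. \<forall>i\<in>F. Poly_Mapping.lookup a i = 0) \<and> J = ideal_gen (monom ` T))"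

lemma ideal_prod_monomial_ideal:
  "ideal_prod (ideal_gen (monom ` T)) (ideal_gen (monom ` T')) =
   (ideal_gen (monom ` {a + b | a b. a \<in> T \<and> b \<in> T'}) :: ('v, 'k::field) mpoly set)"
proof -
  have "{x * y | x y. x \<in> monom ` T \<and> y \<in> monom ` T'} =
        (monom ` {a + b | a b. a \<in> T \<and> b \<in> T'} :: ('v, 'k) mpoly set)"
  proof (intro equalityI subsetI)
    fix z assume "z \<in> {x * y | x y. x \<in> monom ` T \<and> y \<in> monom ` T'}"
    then obtain a b where "a \<in> T" "b \<in> T'" "z = monom a * monom b"
      by blast
    then show "z \<in> monom ` {a + b | a b. a \<in> T \<and> b \<in> T'}"
      using monom_mult[of a b] by blast
  next
    fix z assume "z \<in> monom ` {a + b | a b. a \<in> T \<and> b \<in> T'}"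
    then obtain a b where "a \<in> T" "b \<in> T'" "z = monom (a + b)"
      by blast
    then show "z \<in> {x * y | x y. x \<in> monom ` T \<and> y \<in> monom ` T'}"
      by (intro CollectI exI[of _ "monom a"] exI[of _ "monom b"]) (simp add: monom_mult)
  qed
  then show ?thesis
    by (simp add: ideal_prod_ideal_gen)
qed

lemma monomial_ideal_outside_ideal_pow:
  fixes J :: "('v, 'k::field) mpoly set"
  assumes "monomial_ideal_outside F J"
  shows "monomial_ideal_outside F (ideal_pow J n)"
proof (induction n)
  case 0
  show ?case
    unfolding monomial_ideal_outside_def
    by (intro exI[of _ "{0}"]) (simp add: monom_zero ideal_gen_one)
next
  case (Suc n)
  obtain T T' where T: "\<forall>a\<in>T. \<forall>i\<in>F. Poly_Mapping.lookup a i = 0" "J = ideal_gen (monom ` T)"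
    and T': "\<forall>a\<in>T'. \<forall>i\<in>F. Poly_Mapping.lookup a i = 0" "ideal_pow J n = ideal_gen (monom ` T')"
    using assms Suc unfolding monomial_ideal_outside_def by blast
  have "ideal_pow J (Suc n) = ideal_gen (monom ` {a + b | a b. a \<in> T \<and> b \<in> T'})"
    by (simp only: ideal_pow.simps T'(2)) (simp only: T(2) ideal_prod_monomial_ideal)
  moreover have "\<forall>c\<in>{a + b | a b. a \<in> T \<and> b \<in> T'}. \<forall>i\<in>F. Poly_Mapping.lookup c i = 0"
    using T(1) T'(1) by (auto simp: lookup_add)
  ultimately show ?case
    unfolding monomial_ideal_outside_def by blast
qed

section \<open>Monomial ideals in the variables outside F are \<open>P\<^sub>F\<close>-saturated\<close>

lemma finite_ex_min_on:
  fixes f :: "'a \<Rightarrow> 'b::linorder"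
  assumes "finite A" "A \<noteq> {}"
  shows "\<exists>x\<in>A. \<forall>y\<in>A. f x \<le> f y"
  using arg_min_if_finite[OF assms, of f] by (metis not_less)

lemma min_key_summands_unique:
  fixes \<kappa> :: "'a::plus \<Rightarrow> 'b::linordered_cancel_ab_semigroup_add"
  assumes "inj \<kappa>" and add: "\<And>x y. \<kappa> (x + y) = \<kappa> x + \<kappa> y"
    and "\<kappa> b \<le> \<kappa> b'" "\<kappa> c \<le> \<kappa> c'" "b' + c' = b + c"
  shows "b' = b \<and> c' = c"
proof -
  have sum: "\<kappa> b' + \<kappa> c' = \<kappa> b + \<kappa> c"
    using add assms(5) by metis
  have "\<kappa> b' = \<kappa> b"
  proof (rule ccontr)
    assume "\<kappa> b' \<noteq> \<kappa> b"
    then have "\<kappa> b + \<kappa> c < \<kappa> b' + \<kappa> c'"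
      using assms(3,4) by (intro add_less_le_mono) auto
    then show False
      using sum by simp
  qed
  moreover from this have "\<kappa> c' = \<kappa> c"
    using sum by simp
  ultimately show ?thesis
    using \<open>inj \<kappa>\<close> by (simp add: inj_eq)
qed

lemma lookup_mult_unique_summands:
  fixes p q :: "'a::comm_monoid_add \<Rightarrow>\<^sub>0 'b::semiring_0"
  assumes "\<And>b' c'. b' \<in> Poly_Mapping.keys p \<Longrightarrow> c' \<in> Poly_Mapping.keys q \<Longrightarrow>
      b' + c' = b + c \<Longrightarrow> b' = b \<and> c' = c"
  shows "Poly_Mapping.lookup (p * q) (b + c) = Poly_Mapping.lookup p b * Poly_Mapping.lookup q c"
proof -
  have "Poly_Mapping.lookup p l * (\<Sum>c'. Poly_Mapping.lookup q c' when b + c = l + c') =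
        (Poly_Mapping.lookup p b * Poly_Mapping.lookup q c when l = b)" for l
  proof (cases "l \<in> Poly_Mapping.keys p")
    case True
    have "(Poly_Mapping.lookup q c' when b + c = l + c') =
          ((Poly_Mapping.lookup q c when l = b) when c' = c)" for c'
    proof (cases "c' \<in> Poly_Mapping.keys q \<and> b + c = l + c'")
      case True
      then have "l = b \<and> c' = c"
        using assms \<open>l \<in> Poly_Mapping.keys p\<close> by metis
      then show ?thesis
        by simp
    next
      case False
      then show ?thesis
        unfolding when_def in_keys_iff by metis
    qed
    then show ?thesis
      by (simp add: when_def)
  next
    case False
    then show ?thesis
      by (auto simp: when_def in_keys_iff)
  qed
  then show ?thesis
    by (simp add: lookup_mult)
qed

definition deg_outside :: "'v::finite set \<Rightarrow> ('v \<Rightarrow>\<^sub>0 nat) \<Rightarrow> nat" where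
  "deg_outside F e = (\<Sum>i\<in>-F. Poly_Mapping.lookup e i)"

lemma deg_outside_add: "deg_outside F (a + b) = deg_outside F a + deg_outside F b"
  by (simp add: deg_outside_def lookup_add sum.distrib)

lemma deg_outside_eq_0_iff:
  "deg_outside F e = 0 \<longleftrightarrow> (\<forall>i. i \<notin> F \<longrightarrow> Poly_Mapping.lookup e i = 0)"
  by (auto simp: deg_outside_def)

text \<open>A term order refining \<open>deg_outside F\<close>: exponent vectors are embedded additively and
  injectively into \<open>nat \<Rightarrow>\<^sub>0 nat\<close>, with the degree in front, and compared lexicographically.\<close>

definition term_key :: "'v::finite set \<Rightarrow> ('v \<Rightarrow>\<^sub>0 nat) \<Rightarrow> (nat \<Rightarrow>\<^sub>0 nat)" where
  "term_key F e = Poly_Mapping.single 0 (deg_outside F e) +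
     (\<Sum>v\<in>UNIV. Poly_Mapping.single (Suc (to_nat v)) (Poly_Mapping.lookup e v))"

lemma lookup_term_key_0: "Poly_Mapping.lookup (term_key F e) 0 = deg_outside F e"
  by (simp add: term_key_def lookup_add lookup_sum lookup_single)

lemma lookup_term_key_Suc:
  "Poly_Mapping.lookup (term_key F e) (Suc (to_nat v)) = Poly_Mapping.lookup e v"
  by (simp add: term_key_def lookup_add lookup_sum lookup_single when_def)

lemma term_key_add: "term_key F (a + b) = term_key F a + term_key F b"
  by (simp add: term_key_def deg_outside_add single_add lookup_add sum.distrib algebra_simps)

lemma inj_term_key: "inj (term_key F)"
proof (rule injI, rule poly_mapping_eqI)
  fix a b v assume "term_key F a = term_key F b"
  then show "Poly_Mapping.lookup a v = Poly_Mapping.lookup b v"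
    by (metis lookup_term_key_Suc)
qed

lemma term_key_less: "deg_outside F a < deg_outside F b \<Longrightarrow> term_key F a < term_key F b"
  unfolding less_poly_mapping.rep_eq less_fun_def
  by (intro exI[of _ 0]) (simp add: lookup_term_key_0)

lemma monom_dvd_add_outside:
  assumes "\<forall>i\<in>F. Poly_Mapping.lookup a i = 0" and "deg_outside F b = 0"
    and "monom_dvd a (b + e)"
  shows "monom_dvd a e"
  unfolding monom_dvd_def
proof
  fix v
  show "Poly_Mapping.lookup a v \<le> Poly_Mapping.lookup e v"
  proof (cases "v \<in> F")
    case True
    then show ?thesis
      using assms(1) by simp
  next
    case False
    then have "Poly_Mapping.lookup b v = 0"
      using assms(2) by (simp add: deg_outside_eq_0_iff)
    moreover have "Poly_Mapping.lookup a v \<le> Poly_Mapping.lookup (b + e) v"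
      using assms(3) unfolding monom_dvd_def by blast
    ultimately show ?thesis
      by (simp add: lookup_add)
  qed
qed

text \<open>If \<open>s \<notin> P\<^sub>F\<close> and \<open>g \<notin> J\<close>, let b be the \<open>term_key F\<close>-least exponent of s and
  c the least exponent of g outside J. Then b involves only the variables in F, so \<open>b + c\<close>
  is outside J as well, and by minimality \<open>b + c\<close> arises in \<open>s * g\<close> only as the product
  of these two terms. So \<open>b + c\<close> is an exponent of \<open>s * g\<close>, which therefore is not in J.\<close>

lemma saturation_PF_monomial_ideal_outside:
  fixes J :: "('v::finite, 'k::field) mpoly set"
  assumes "monomial_ideal_outside F J"
  shows "saturation (PF F) J \<subseteq> J"
proof
  fix g assume "g \<in> saturation (PF F) J"
  then obtain s where s: "s \<notin> PF F" "s * g \<in> J"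
    unfolding saturation_def by blast
  obtain T where T: "\<forall>a\<in>T. \<forall>i\<in>F. Poly_Mapping.lookup a i = 0"
    and J: "J = ideal_gen (monom ` T)"
    using assms unfolding monomial_ideal_outside_def by blast
  define N where "N = {e. \<not> (\<exists>a\<in>T. monom_dvd a e)}"
  show "g \<in> J"
  proof (rule ccontr)
    assume "g \<notin> J"
    then have "Poly_Mapping.keys g \<inter> N \<noteq> {}"
      unfolding J N_def mem_monomial_ideal_iff by blast
    then obtain c where c: "c \<in> Poly_Mapping.keys g \<inter> N"
      and c_min: "\<forall>c'\<in>Poly_Mapping.keys g \<inter> N. term_key F c \<le> term_key F c'"
      using finite_ex_min_on[OF finite_Int[OF disjI1[OF finite_keys]], of g N "term_key F"]
      by blast
    obtain b0 where b0: "b0 \<in> Poly_Mapping.keys s" "deg_outside F b0 = 0"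
      using s(1) by (auto simp: mem_PF_iff deg_outside_eq_0_iff)
    then have "Poly_Mapping.keys s \<noteq> {}"
      by blast
    then obtain b where b: "b \<in> Poly_Mapping.keys s"
      and b_min: "\<forall>b'\<in>Poly_Mapping.keys s. term_key F b \<le> term_key F b'"
      using finite_ex_min_on[OF finite_keys, of s "term_key F"] by blast
    have "deg_outside F b = 0"
      using bspec[OF b_min b0(1)] b0(2) term_key_less[of F b0 b]
      by (auto simp: not_less[symmetric])
    then have N_shift: "b + e \<in> N" if "e \<in> N" for e
      using that T monom_dvd_add_outside unfolding N_def by blast
    have "Poly_Mapping.lookup (s * g) (b + c) = Poly_Mapping.lookup s b * Poly_Mapping.lookup g c"
    proof (rule lookup_mult_unique_summands)
      fix b' c' assume b': "b' \<in> Poly_Mapping.keys s" and c': "c' \<in> Poly_Mapping.keys g"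
        and eq: "b' + c' = b + c"
      have "c' \<in> N"
        using N_shift c monom_dvd_add_left[of _ c' b'] unfolding N_def eq by blast
      have "term_key F b \<le> term_key F b'"
        using b_min b' by blast
      moreover have "term_key F c \<le> term_key F c'"
        using c_min c' \<open>c' \<in> N\<close> by blast
      ultimately show "b' = b \<and> c' = c"
        by (rule min_key_summands_unique[OF inj_term_key term_key_add _ _ eq])
    qed
    then have "b + c \<in> Poly_Mapping.keys (s * g)"
      using b c by (simp add: in_keys_iff)
    then show False
      using s(2) N_shift c unfolding J N_def mem_monomial_ideal_iff by blast
  qed
qed

section \<open>Primary components of powers of monomial ideals\<close>

lemma monomial_ideal_outside_restrict_vars:
  "monomial_ideal_outside F (ideal_gen (monom ` restrict_vars (- F) ` S))"
  unfolding monomial_ideal_outside_def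
  by (intro exI[of _ "restrict_vars (- F) ` S"]) (auto simp: lookup_restrict_vars)

lemma prim_comp_monomial_ideal:
  fixes S :: "('v::finite \<Rightarrow>\<^sub>0 nat) set"
  assumes P: "prime_ideal (PF F :: ('v, 'k::field) mpoly set)"
  shows "prim_comp (ideal_gen (monom ` S)) F =
         (ideal_gen (monom ` restrict_vars (- F) ` S) :: ('v, 'k) mpoly set)"
    (is "prim_comp ?I F = ?L")
proof
  have split: "monom (restrict_vars F a) * monom (restrict_vars (- F) a) = (monom a :: ('v, 'k) mpoly)"
    for a
    by (simp add: monom_mult restrict_vars_add_compl)
  have "?I \<subseteq> ?L"
  proof (rule ideal_gen_least[OF is_ideal_ideal_gen], rule subsetI)
    fix x :: "('v, 'k) mpoly" assume "x \<in> monom ` S"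
    then obtain a where "a \<in> S" "x = monom a" by blast
    then show "x \<in> ?L"
      using split[of a] ideal_mult[OF is_ideal_ideal_gen] ideal_gen_mem by (metis imageI)
  qed
  then show "prim_comp ?I F \<subseteq> ?L"
    unfolding prim_comp_eq_saturation
    using saturation_PF_monomial_ideal_outside[OF monomial_ideal_outside_restrict_vars]
      saturation_mono by blast
  show "?L \<subseteq> prim_comp ?I F"
    unfolding prim_comp_eq_saturation
  proof (rule ideal_gen_least[OF is_ideal_saturation[OF P is_ideal_ideal_gen]], rule subsetI)
    fix x :: "('v, 'k) mpoly" assume "x \<in> monom ` restrict_vars (- F) ` S"
    then obtain a where "a \<in> S" "x = monom (restrict_vars (- F) a)" by blast
    then have "monom (restrict_vars F a) \<notin> PF F" "monom (restrict_vars F a) * x \<in> ?I"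
      using split[of a] monom_restrict_vars_notin_PF by (auto intro: ideal_gen_mem)
    then show "x \<in> saturation (PF F) ?I"
      unfolding saturation_def by blast
  qed
qed

lemma monomial_ideal_outside_prim_comp:
  fixes I :: "('v::finite, 'k::field) mpoly set"
  assumes "monomial_ideal I" and "prime_ideal (PF F :: ('v, 'k) mpoly set)"
  shows "monomial_ideal_outside F (prim_comp I F)"
proof -
  obtain S where "I = ideal_gen (monom ` S)"
    using assms(1) unfolding monomial_ideal_def by blast
  then show ?thesis
    using prim_comp_monomial_ideal[OF assms(2)] monomial_ideal_outside_restrict_vars by simp
qed

lemma prim_comp_ideal_pow:
  fixes I :: "('v::finite, 'k::field) mpoly set"
  assumes "monomial_ideal I" and P: "prime_ideal (PF F :: ('v, 'k) mpoly set)"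
  shows "prim_comp (ideal_pow I t) F = ideal_pow (prim_comp I F) t"
proof
  show "ideal_pow (prim_comp I F) t \<subseteq> prim_comp (ideal_pow I t) F"
    unfolding prim_comp_eq_saturation by (rule ideal_pow_saturation[OF P order_refl])
  have "ideal_pow I t \<subseteq> ideal_pow (prim_comp I F) t"
    unfolding prim_comp_eq_saturation by (rule ideal_pow_mono[OF subset_saturation[OF P]])
  then have "prim_comp (ideal_pow I t) F \<subseteq> saturation (PF F) (ideal_pow (prim_comp I F) t)"
    unfolding prim_comp_eq_saturation by (rule saturation_mono)
  also have "\<dots> \<subseteq> ideal_pow (prim_comp I F) t"
    using assms by (intro saturation_PF_monomial_ideal_outside monomial_ideal_outside_ideal_pow
        monomial_ideal_outside_prim_comp)
  finally show "prim_comp (ideal_pow I t) F \<subseteq> ideal_pow (prim_comp I F) t" .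
qed

theorem proposition2p2:
  fixes I :: "('v::finite, 'k::field) mpoly set" and t :: nat
  assumes "is_ideal I" and "monomial_ideal I" and "t \<ge> 1"
  shows "integrally_closed (symb_pow I t) \<longleftrightarrow>
         (\<forall>F\<in>Fam I. integrally_closed (ideal_pow (prim_comp I F) t))"
proof -
  have P: "prime_ideal (PF F :: ('v, 'k) mpoly set)" if "F \<in> Fam I" for F
    using that unfolding Fam_def minimal_prime_def by blast
  have "symb_pow I t = (\<Inter>F\<in>Fam I. saturation (PF F) (ideal_pow I t))"
    unfolding symb_pow_def prim_comp_eq_saturation ..
  moreover have "ideal_pow (prim_comp I F) t = saturation (PF F) (ideal_pow I t)"
    if "F \<in> Fam I" for F
    using prim_comp_ideal_pow[OF assms(2) P[OF that]] by (simp add: prim_comp_eq_saturation)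
  ultimately show ?thesis
    using integrally_closed_INT_saturation_iff[of "Fam I" PF "ideal_pow I t", OF P] by simp
qed

end
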